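(* Let $d\ge2$, $(S,\mathfrak n,\mathbf k)$ a complete regular local ring with $\mathbf k$ algebraically closed of characteristic not dividing $d$, $0\ne f\in\mathfrak n^2$, and $R^\sharp=S[[z]]/(f+z^d)$; assume $f+z^d$ is irreducible. Let $N$ be a maximal Cohen-Macaulay $R^\sharp$-module and $X\in\mathrm{MF}_S^d(f)$. Then $\mu_{R^\sharp}(N)=\operatorname{rank}_S(N)$ if and only if $N^\flat$ is reduced, and $\mu_{R^\sharp}(X^\sharp)=\operatorname{rank}_S(X^\sharp)$ if and only if $X$ is reduced.
   Context: $\mathrm{MF}_S^d(f)$ is the category of matrix factorizations of $f$ with $d$ factors: $X=(\phi_1:F_2\to F_1,\dots,\phi_d:F_1\to F_d)$ with $F_i$ finitely generated free $S$-modules of equal rank and $\phi_1\cdots\phi_d=f\cdot1_{F_1}$. $X$ is reduced if $\mathrm{Im}\,\phi_k\subseteq\mathfrak nF_k$ for all $k$. A maximal Cohen-Macaulay $R^\sharp$-module is a finitely generated $R^\sharp$-module free over $S$; $\mu_{R^\sharp}$ denotes minimal number of generators. Fix $\mu\in S$ with $\mu^d=-1$. For such $N$ with $\phi:N\to N$ multiplication by $z$, $N^\flat=(\mu\phi,\dots,\mu\phi)$. For $X=(\phi_1,\dots,\phi_d)$, $X^\sharp$ is the $S$-module $F_d\oplus\cdots\oplus F_1$ with $z\cdot(x_d,x_{d-1},\dots,x_1)=(\mu^{-1}\phi_d(x_1),\mu^{-1}\phi_{d-1}(x_d),\dots,\mu^{-1}\phi_1(x_2))$. *)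

theory Defs
  imports "Jordan_Normal_Form.Matrix" "HOL-Computational_Algebra.Formal_Power_Series"
    "HOL-Computational_Algebra.Polynomial" "HOL-Computational_Algebra.Factorial_Ring"
    "HOL-Library.Extended_Nat"
begin

definition is_ideal :: "'a::comm_ring_1 set \<Rightarrow> bool" where
  "is_ideal I \<longleftrightarrow> 0 \<in> I \<and> (\<forall>x\<in>I. \<forall>y\<in>I. x + y \<in> I) \<and> (\<forall>r x. x \<in> I \<longrightarrow> r * x \<in> I)"

definition maximal_ideal :: "'a::comm_ring_1 set \<Rightarrow> bool" where
  "maximal_ideal I \<longleftrightarrow> is_ideal I \<and> I \<noteq> UNIV \<and>
     (\<forall>J. is_ideal J \<and> I \<subseteq> J \<longrightarrow> J = I \<or> J = UNIV)"

definition prime_ideal :: "'a::comm_ring_1 set \<Rightarrow> bool" where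
  "prime_ideal P \<longleftrightarrow> is_ideal P \<and> P \<noteq> UNIV \<and> (\<forall>a b. a * b \<in> P \<longrightarrow> a \<in> P \<or> b \<in> P)"

definition ideal_gen :: "'a::comm_ring_1 set \<Rightarrow> 'a set" where
  "ideal_gen G = {x. \<exists>c. x = (\<Sum>g\<in>G. c g * g)}"

definition noetherian_ring :: "'a::comm_ring_1 itself \<Rightarrow> bool" where
  "noetherian_ring _ \<longleftrightarrow> (\<forall>I::'a set. is_ideal I \<longrightarrow> (\<exists>G. finite G \<and> G \<subseteq> I \<and> I = ideal_gen G))"

definition local_ring :: "'a::comm_ring_1 itself \<Rightarrow> bool" where
  "local_ring _ \<longleftrightarrow> (\<exists>!m::'a set. maximal_ideal m)"

definition max_ideal :: "'a::comm_ring_1 set" where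
  "max_ideal = (THE m. maximal_ideal m)"

definition ideal_prod_set :: "'a::comm_ring_1 set \<Rightarrow> 'a set \<Rightarrow> 'a set" where
  "ideal_prod_set I J = {x. \<exists>(m::nat) a b. (\<forall>i<m. a i \<in> I \<and> b i \<in> J) \<and> x = (\<Sum>i<m. a i * b i)}"

fun ideal_pow :: "'a::comm_ring_1 set \<Rightarrow> nat \<Rightarrow> 'a set" where
  "ideal_pow I 0 = UNIV"
| "ideal_pow I (Suc k) = ideal_prod_set I (ideal_pow I k)"

definition krull_dim :: "'a::comm_ring_1 itself \<Rightarrow> enat" where
  "krull_dim _ = Sup {enat m | m. \<exists>P::nat \<Rightarrow> 'a set.
       (\<forall>i\<le>m. prime_ideal (P i)) \<and> (\<forall>i<m. P i \<subset> P (Suc i))}"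

definition regular_local_ring :: "'a::comm_ring_1 itself \<Rightarrow> bool" where
  "regular_local_ring T \<longleftrightarrow> noetherian_ring T \<and> local_ring T \<and>
     (\<exists>G::'a set. finite G \<and> max_ideal = ideal_gen G \<and> enat (card G) = krull_dim T)"

definition complete_local_ring :: "'a::comm_ring_1 itself \<Rightarrow> bool" where
  "complete_local_ring T \<longleftrightarrow> local_ring T \<and>
     (\<Inter>k. ideal_pow (max_ideal::'a set) k) = {0} \<and>
     (\<forall>x::nat \<Rightarrow> 'a. (\<forall>k. \<exists>N. \<forall>m\<ge>N. x m - x N \<in> ideal_pow max_ideal k) \<longrightarrow>
        (\<exists>y. \<forall>k. \<exists>N. \<forall>m\<ge>N. x m - y \<in> ideal_pow max_ideal k))"

text \<open>The residue field \<open>S/\<frak>n\<close> is algebraically closed: every polynomial over S whose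
  reduction modulo \<open>\<frak>n\<close> is nonconstant (of the same degree) has a root modulo \<open>\<frak>n\<close>.\<close>
definition residue_field_alg_closed :: "'a::comm_ring_1 itself \<Rightarrow> bool" where
  "residue_field_alg_closed _ \<longleftrightarrow> (\<forall>p::'a poly. degree p \<ge> 1 \<and> lead_coeff p \<notin> max_ideal \<longrightarrow>
       (\<exists>a. poly p a \<in> max_ideal))"

definition max_ideal_vecs :: "nat \<Rightarrow> 'a::comm_ring_1 vec set" where
  "max_ideal_vecs r = {w \<in> carrier_vec r. \<forall>i<r. w $ i \<in> max_ideal}"

text \<open>A maximal Cohen-Macaulay \<open>R\<^sup>\<sharp>\<close>-module is a free S-module \<open>S^r\<close> together with the
  action of z, an \<open>r\<times>r\<close> matrix A with \<open>A^d = -f\<close>.\<close>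
definition zspan :: "nat \<Rightarrow> 'a::comm_ring_1 mat \<Rightarrow> 'a vec set \<Rightarrow> 'a vec set" where
  "zspan r A G = {w \<in> carrier_vec r. \<exists>c m. \<forall>i<r.
      w $ i = (\<Sum>g\<in>G. \<Sum>k<m. c g k * ((A ^\<^sub>m k) *\<^sub>v g) $ i)}"

definition mu_gen :: "nat \<Rightarrow> 'a::comm_ring_1 mat \<Rightarrow> nat" where
  "mu_gen r A = (LEAST k. \<exists>G. finite G \<and> card G = k \<and> G \<subseteq> carrier_vec r \<and>
                    zspan r A G = carrier_vec r)"

fun mf_prod :: "nat \<Rightarrow> (nat \<Rightarrow> 'a::comm_ring_1 mat) \<Rightarrow> nat \<Rightarrow> 'a mat" where
  "mf_prod n phi 0 = 1\<^sub>m n"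
| "mf_prod n phi (Suc k) = mf_prod n phi k * phi (Suc k)"

text \<open>\<open>X = (\<phi>\<^sub>1,\<dots>,\<phi>\<^sub>d) \<in> MF\<^sub>S\<^sup>d(f)\<close> with all \<open>F\<^sub>i = S^n\<close>; indices 1..d.\<close>
definition is_mf :: "nat \<Rightarrow> 'a::comm_ring_1 \<Rightarrow> nat \<Rightarrow> (nat \<Rightarrow> 'a mat) \<Rightarrow> bool" where
  "is_mf d f n phi \<longleftrightarrow> (\<forall>k\<in>{1..d}. phi k \<in> carrier_mat n n) \<and> mf_prod n phi d = f \<cdot>\<^sub>m 1\<^sub>m n"

definition reduced_mf :: "nat \<Rightarrow> nat \<Rightarrow> (nat \<Rightarrow> 'a::comm_ring_1 mat) \<Rightarrow> bool" where
  "reduced_mf d n phi \<longleftrightarrow> (\<forall>k\<in>{1..d}. \<forall>v\<in>carrier_vec n. phi k *\<^sub>v v \<in> max_ideal_vecs n)"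

definition flat_mf :: "'a::comm_ring_1 \<Rightarrow> 'a mat \<Rightarrow> nat \<Rightarrow> 'a mat" where
  "flat_mf mu A = (\<lambda>_. mu \<cdot>\<^sub>m A)"

text \<open>\<open>X\<^sup>\<sharp>\<close>: the module \<open>F\<^sub>d \<oplus> \<cdots> \<oplus> F\<^sub>1 = S^(d n)\<close> (block j holds \<open>x\<^sub>d\<^sub>-\<^sub>j\<close>) with z acting by
  \<open>z(x\<^sub>d,\<dots>,x\<^sub>1) = (\<mu>\<^sup>-\<^sup>1\<phi>\<^sub>d(x\<^sub>1), \<mu>\<^sup>-\<^sup>1\<phi>\<^sub>d\<^sub>-\<^sub>1(x\<^sub>d), \<dots>, \<mu>\<^sup>-\<^sup>1\<phi>\<^sub>1(x\<^sub>2))\<close>.\<close>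
definition sharp_mat :: "nat \<Rightarrow> 'a::comm_ring_1 \<Rightarrow> nat \<Rightarrow> (nat \<Rightarrow> 'a mat) \<Rightarrow> 'a mat" where
  "sharp_mat d mu n phi = mat (d * n) (d * n) (\<lambda>(i, j).
     (let bi = i div n; ri = i mod n; bj = j div n; cj = j mod n; nu = (THE nu. mu * nu = 1) in
      if bi = 0 \<and> bj = d - 1 then nu * (phi d $$ (ri, cj))
      else if bi \<ge> 1 \<and> bj = bi - 1 then nu * (phi (d - bi) $$ (ri, cj))
      else 0))"

end

theory Submission
  imports Defs "Jordan_Normal_Form.Determinant"
begin

text \<open>Both equivalences are instances of one criterion for the free module \<open>S\<^sup>m\<close> on which
  \<open>z\<close> acts by a matrix \<open>B\<close>: \<open>\<mu>(S\<^sup>m) = m\<close> iff all entries of \<open>B\<close> lie in \<open>\<frak>n\<close>.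
  If they do, every positive power of \<open>z\<close> vanishes modulo \<open>\<frak>n\<close>, so a generating set spans
  \<open>S\<^sup>m\<close> modulo \<open>\<frak>n\<close> and has at least \<open>m\<close> elements (Nakayama). If an off-diagonal entry
  \<open>B\<^sub>i\<^sub>j\<close> is a unit, then \<open>e\<^sub>i\<close> lies in the span of the other basis vectors and \<open>z e\<^sub>j\<close>, so
  \<open>m - 1\<close> generators suffice. A unit can never sit only on the diagonal: for \<open>X\<^sup>\<sharp>\<close> the
  diagonal is zero, and for \<open>N\<close> with off-diagonal entries in \<open>\<frak>n\<close> the diagonal of
  \<open>A\<^sup>d = -f\<close> is congruent to \<open>A\<^sub>i\<^sub>i\<^sup>d\<close> modulo \<open>\<frak>n\<close>. Finally \<open>\<mu>\<close> is a unit, so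
  it does not affect reducedness.\<close>

lemma ideal_zero: "is_ideal I \<Longrightarrow> 0 \<in> I"
  by (simp add: is_ideal_def)

lemma ideal_add: "is_ideal I \<Longrightarrow> x \<in> I \<Longrightarrow> y \<in> I \<Longrightarrow> x + y \<in> I"
  by (simp add: is_ideal_def)

lemma ideal_mult_left: "is_ideal I \<Longrightarrow> x \<in> I \<Longrightarrow> r * x \<in> I"
  by (simp add: is_ideal_def)

lemma ideal_mult_right: "is_ideal I \<Longrightarrow> x \<in> I \<Longrightarrow> x * r \<in> I"
  by (simp add: is_ideal_def mult.commute)

lemma ideal_uminus: "is_ideal I \<Longrightarrow> x \<in> I \<Longrightarrow> - x \<in> I"
  using ideal_mult_left[of I x "-1"] by simp

lemma ideal_diff: "is_ideal I \<Longrightarrow> x \<in> I \<Longrightarrow> y \<in> I \<Longrightarrow> x - y \<in> I"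
  using ideal_add[of I x "- y"] ideal_uminus[of I y] by simp

lemma ideal_sum: "is_ideal I \<Longrightarrow> (\<And>i. i \<in> S \<Longrightarrow> g i \<in> I) \<Longrightarrow> sum g S \<in> I"
  by (induction S rule: infinite_finite_induct) (auto simp: ideal_zero ideal_add)

lemma ideal_unit_mult_iff:
  assumes "is_ideal I" and "a dvd 1"
  shows "a * x \<in> I \<longleftrightarrow> x \<in> I"
proof
  from \<open>a dvd 1\<close> obtain b where "1 = a * b" by (rule dvdE)
  assume "a * x \<in> I"
  then have "b * (a * x) \<in> I" using assms(1) ideal_mult_left by blast
  also have "b * (a * x) = x" using \<open>1 = a * b\<close> by (metis mult.assoc mult.commute mult_1)
  finally show "x \<in> I" .
qed (use assms(1) ideal_mult_left in blast)

lemma ideal_pow_Suc_subset: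
  assumes "is_ideal I"
  shows "ideal_pow I (Suc k) \<subseteq> I"
proof
  fix x assume "x \<in> ideal_pow I (Suc k)"
  then obtain m :: nat and a b where "\<forall>i<m. a i \<in> I \<and> b i \<in> ideal_pow I k" and "x = (\<Sum>i<m. a i * b i)"
    unfolding ideal_pow.simps ideal_prod_set_def by blast
  then show "x \<in> I" using assms by (auto intro: ideal_sum ideal_mult_right)
qed

lemma ex_maximal_ideal_superset:
  fixes I :: "'a::comm_ring_1 set"
  assumes "is_ideal I" and "1 \<notin> I"
  shows "\<exists>M. maximal_ideal M \<and> I \<subseteq> M"
proof -
  define \<A> where "\<A> = {J. is_ideal J \<and> 1 \<notin> J \<and> I \<subseteq> J}"
  have "\<Union>\<C> \<in> \<A>" if "\<C> \<noteq> {}" and "subset.chain \<A> \<C>" for \<C>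
  proof -
    have \<C>: "\<C> \<subseteq> \<A>" and chain: "\<And>X Y. X \<in> \<C> \<Longrightarrow> Y \<in> \<C> \<Longrightarrow> X \<subseteq> Y \<or> Y \<subseteq> X"
      using that(2) unfolding subset.chain_def by auto
    have "is_ideal (\<Union>\<C>)" unfolding is_ideal_def
    proof (intro conjI ballI allI impI)
      show "0 \<in> \<Union>\<C>" using \<open>\<C> \<noteq> {}\<close> \<C> ideal_zero unfolding \<A>_def by blast
    next
      fix x y assume "x \<in> \<Union>\<C>" "y \<in> \<Union>\<C>"
      then obtain X Y where "X \<in> \<C>" "Y \<in> \<C>" "x \<in> X" "y \<in> Y" by blast
      with chain[of X Y] \<C> show "x + y \<in> \<Union>\<C>" by (auto simp: \<A>_def intro: ideal_add)
    next
      fix r x assume "x \<in> \<Union>\<C>"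
      with \<C> show "r * x \<in> \<Union>\<C>" by (auto simp: \<A>_def intro: ideal_mult_left)
    qed
    with \<C> \<open>\<C> \<noteq> {}\<close> show ?thesis by (auto simp: \<A>_def)
  qed
  moreover have "\<A> \<noteq> {}" using assms by (auto simp: \<A>_def)
  ultimately obtain M where M: "M \<in> \<A>" and max: "\<And>X. X \<in> \<A> \<Longrightarrow> M \<subseteq> X \<Longrightarrow> X = M"
    using subset_Zorn_nonempty[of \<A>] by blast
  have "maximal_ideal M" unfolding maximal_ideal_def
  proof (intro conjI allI impI)
    show "is_ideal M" "M \<noteq> UNIV" using M by (auto simp: \<A>_def)
  next
    fix J assume J: "is_ideal J \<and> M \<subseteq> J"
    show "J = M \<or> J = UNIV"
    proof (cases "1 \<in> J")
      case True
      then show ?thesis using J ideal_mult_left[of J 1] by auto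
    next
      case False
      then show ?thesis using J M max[of J] by (auto simp: \<A>_def)
    qed
  qed
  with M show ?thesis by (auto simp: \<A>_def)
qed

lemma local_ring_maximal_max_ideal:
  assumes "local_ring TYPE('a::comm_ring_1)"
  shows "maximal_ideal (max_ideal :: 'a set)"
  using assms unfolding local_ring_def max_ideal_def by (rule theI')

lemma local_ring_is_ideal_max_ideal:
  "local_ring TYPE('a::comm_ring_1) \<Longrightarrow> is_ideal (max_ideal :: 'a set)"
  using local_ring_maximal_max_ideal maximal_ideal_def by blast

lemma local_ring_one_notin_max_ideal:
  "local_ring TYPE('a::comm_ring_1) \<Longrightarrow> (1::'a) \<notin> max_ideal"
  using local_ring_maximal_max_ideal ideal_mult_left[of "max_ideal :: 'a set" 1]
  unfolding maximal_ideal_def by auto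

lemma local_ring_notin_max_ideal_iff:
  assumes loc: "local_ring TYPE('a::comm_ring_1)"
  shows "(a::'a) \<notin> max_ideal \<longleftrightarrow> a dvd 1"
proof
  assume "a dvd 1"
  then show "a \<notin> max_ideal"
    using ideal_unit_mult_iff[OF local_ring_is_ideal_max_ideal[OF loc], of a 1]
      local_ring_one_notin_max_ideal[OF loc] by simp
next
  assume notin: "a \<notin> max_ideal"
  show "a dvd 1"
  proof (rule ccontr)
    assume "\<not> a dvd 1"
    define J where "J = {r * a | r. True}"
    have "is_ideal J" unfolding is_ideal_def J_def
      by (auto simp: distrib_right[symmetric] intro: exI[of _ 0]) (metis mult.assoc)
    moreover have "1 \<notin> J" using \<open>\<not> a dvd 1\<close> by (auto simp: J_def mult.commute dvd_def)
    ultimately obtain M where "maximal_ideal M" "J \<subseteq> M"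
      using ex_maximal_ideal_superset by blast
    moreover have "M = max_ideal"
      using loc \<open>maximal_ideal M\<close> local_ring_maximal_max_ideal[OF loc]
      unfolding local_ring_def by blast
    moreover have "a \<in> J" by (auto simp: J_def intro: exI[of _ 1])
    ultimately show False using notin by blast
  qed
qed

lemma local_ring_power_in_max_ideal:
  assumes "local_ring TYPE('a::comm_ring_1)" and "(a::'a) ^ k \<in> max_ideal"
  shows "a \<in> max_ideal"
proof (rule ccontr)
  assume "a \<notin> max_ideal"
  then have "a ^ k dvd 1"
    using local_ring_notin_max_ideal_iff[OF assms(1)] by (metis dvd_power_same power_one)
  then show False using assms local_ring_notin_max_ideal_iff by blast
qed

definition entries_in :: "'a set \<Rightarrow> 'a mat \<Rightarrow> bool" where
  "entries_in I M \<longleftrightarrow> (\<forall>i<dim_row M. \<forall>j<dim_col M. M $$ (i, j) \<in> I)"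

lemma entries_in_mult_right:
  assumes "is_ideal I" and "entries_in I B"
  shows "entries_in I (A * B)"
  unfolding entries_in_def
proof (intro allI impI)
  fix i j assume ij: "i < dim_row (A * B)" "j < dim_col (A * B)"
  then have "(A * B) $$ (i, j) = (\<Sum>k<dim_row B. row A i $ k * B $$ (k, j))"
    by (simp add: scalar_prod_def lessThan_atLeast0)
  also have "\<dots> \<in> I"
    using assms ij by (auto simp: entries_in_def intro!: ideal_sum ideal_mult_left)
  finally show "(A * B) $$ (i, j) \<in> I" .
qed

lemma entries_in_mult_mat_vec:
  assumes "is_ideal I" and "entries_in I M" and "dim_vec v = dim_col M" and "i < dim_row M"
  shows "(M *\<^sub>v v) $ i \<in> I"
proof -
  have "(M *\<^sub>v v) $ i = (\<Sum>k<dim_col M. M $$ (i, k) * v $ k)"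
    using assms(3,4) by (simp add: scalar_prod_def lessThan_atLeast0)
  also have "\<dots> \<in> I"
    using assms by (auto simp: entries_in_def intro!: ideal_sum ideal_mult_right)
  finally show ?thesis .
qed

lemma entries_in_pow_mat:
  assumes "is_ideal I" and "entries_in I B" and "k \<noteq> 0"
  shows "entries_in I (B ^\<^sub>m k)"
  using assms(3) by (cases k) (simp_all add: entries_in_mult_right[OF assms(1,2)])

lemma entries_in_smult_unit_iff:
  assumes "is_ideal I" and "a dvd 1"
  shows "entries_in I (a \<cdot>\<^sub>m M) \<longleftrightarrow> entries_in I M"
  using ideal_unit_mult_iff[OF assms] by (simp add: entries_in_def)

lemma prod_diff_in_ideal:
  assumes I: "is_ideal I" and "finite S" and "\<And>i. i \<in> S \<Longrightarrow> f i - g i \<in> I"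
  shows "prod f S - prod g S \<in> I"
  using assms(2,3)
proof (induction S rule: finite_induct)
  case empty
  then show ?case by (simp add: ideal_zero[OF I])
next
  case (insert a S)
  have "prod f (insert a S) - prod g (insert a S)
      = (f a - g a) * prod f S + g a * (prod f S - prod g S)"
    using insert(1,2) by (simp add: algebra_simps)
  also have "\<dots> \<in> I"
    using insert by (intro ideal_add[OF I] ideal_mult_right[OF I] ideal_mult_left[OF I]) auto
  finally show ?case .
qed

lemma det_diff_in_ideal:
  assumes I: "is_ideal I" and M: "M \<in> carrier_mat n n" and M': "M' \<in> carrier_mat n n"
    and diff: "entries_in I (M - M')"
  shows "det M - det M' \<in> I"
proof -
  have entry: "M $$ (i, j) - M' $$ (i, j) \<in> I" if "i < n" "j < n" for i j
    using diff M M' that by (auto simp: entries_in_def)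
  have "det M - det M' = (\<Sum>p | p permutes {0..<n}.
      signof p * ((\<Prod>i = 0..<n. M $$ (i, p i)) - (\<Prod>i = 0..<n. M' $$ (i, p i))))"
    by (simp add: det_def'[OF M] det_def'[OF M'] sum_subtractf right_diff_distrib)
  also have "\<dots> \<in> I"
  proof (intro ideal_sum[OF I] ideal_mult_left[OF I] prod_diff_in_ideal[OF I])
    fix p i assume "p \<in> {p. p permutes {0..<n}}" and "i \<in> {0..<n}"
    then show "M $$ (i, p i) - M' $$ (i, p i) \<in> I"
      using entry permutes_in_image by fastforce
  qed simp
  finally show ?thesis .
qed

lemma det_zero_row:
  assumes M: "M \<in> carrier_mat n n" and "k < n" and "\<And>j. j < n \<Longrightarrow> M $$ (k, j) = 0"
  shows "det M = 0"
proof -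
  have "M = mat\<^sub>r n n (\<lambda>i. if i = k then 0\<^sub>v n else row M i)"
    using assms by auto
  also have "det \<dots> = 0" using M \<open>k < n\<close> by (intro det_row_0) auto
  finally show ?thesis .
qed

lemma inj_on_unit_vec: "inj_on (unit_vec m :: nat \<Rightarrow> 'a::zero_neq_one vec) {..<m}"
  by (auto intro!: inj_onI)

section \<open>Minimal number of generators\<close>

lemma zspan_cong_lincomb:
  assumes I: "is_ideal I" and B: "B \<in> carrier_mat m m" "entries_in I B"
    and G: "G \<subseteq> carrier_vec m" and w: "w \<in> zspan m B G"
  shows "\<exists>c. \<forall>l<m. w $ l - (\<Sum>g\<in>G. c g * g $ l) \<in> I"
proof -
  from w obtain c k where w_eq: "\<And>l. l < m \<Longrightarrow> w $ l = (\<Sum>g\<in>G. \<Sum>t<k. c g t * ((B ^\<^sub>m t) *\<^sub>v g) $ l)"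
    unfolding zspan_def by blast
  define c0 where "c0 g = (if k = 0 then 0 else c g 0)" for g
  have "w $ l - (\<Sum>g\<in>G. c0 g * g $ l) \<in> I" if l: "l < m" for l
  proof -
    have "(\<Sum>t<k. c g t * ((B ^\<^sub>m t) *\<^sub>v g) $ l) - c0 g * g $ l \<in> I" if g: "g \<in> G" for g
    proof (cases k)
      case 0
      then show ?thesis by (simp add: c0_def ideal_zero[OF I])
    next
      case (Suc k')
      have "((B ^\<^sub>m Suc t) *\<^sub>v g) $ l \<in> I" for t
        by (rule entries_in_mult_mat_vec[OF I entries_in_pow_mat[OF I B(2)]]) (use B(1) G g l in auto)
      then have "(\<Sum>t<k'. c g (Suc t) * ((B ^\<^sub>m Suc t) *\<^sub>v g) $ l) \<in> I"
        by (auto intro!: ideal_sum[OF I] ideal_mult_left[OF I])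
      moreover have "((B ^\<^sub>m 0) *\<^sub>v g) $ l = g $ l" using B(1) G g l by auto
      moreover have "(\<Sum>t<k. c g t * ((B ^\<^sub>m t) *\<^sub>v g) $ l) - c0 g * g $ l
          = (\<Sum>t<k'. c g (Suc t) * ((B ^\<^sub>m Suc t) *\<^sub>v g) $ l)"
        unfolding Suc sum.lessThan_Suc_shift c0_def using calculation(2) by simp
      ultimately show ?thesis by simp
    qed
    then have "(\<Sum>g\<in>G. \<Sum>t<k. c g t * ((B ^\<^sub>m t) *\<^sub>v g) $ l) - (\<Sum>g\<in>G. c0 g * g $ l) \<in> I"
      unfolding sum_subtractf[symmetric] by (rule ideal_sum[OF I])
    then show ?thesis using w_eq[OF l] by simp
  qed
  then show ?thesis by blast
qed

text \<open>Nakayama's lemma via determinants: the identity is congruent modulo \<open>I\<close> to a product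
  \<open>P Q\<close> in which \<open>Q\<close> has a zero row as soon as \<open>G\<close> has fewer than \<open>m\<close> elements.\<close>

lemma card_ge_dim_if_spans_mod_ideal:
  fixes G :: "'a::comm_ring_1 vec set"
  assumes I: "is_ideal I" "1 \<notin> I" and G: "finite G"
    and span: "\<And>i. i < m \<Longrightarrow> \<exists>c. \<forall>l<m. unit_vec m i $ l - (\<Sum>g\<in>G. c g * g $ l) \<in> I"
  shows "m \<le> card G"
proof (rule ccontr)
  define s where "s = card G"
  assume "\<not> m \<le> card G"
  then have "s < m" by (simp add: s_def)
  from span have "\<forall>i. \<exists>c. i < m \<longrightarrow> (\<forall>l<m. unit_vec m i $ l - (\<Sum>g\<in>G. c g * g $ l) \<in> I)"
    by blast
  then obtain c where c: "\<And>i l. i < m \<Longrightarrow> l < m \<Longrightarrow> unit_vec m i $ l - (\<Sum>g\<in>G. c i g * g $ l) \<in> I"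
    by metis
  obtain en where en: "bij_betw en {..<s} G"
    using ex_bij_betw_nat_finite[OF G] by (auto simp: s_def lessThan_atLeast0)
  define P where "P = mat m m (\<lambda>(l, p). if p < s then en p $ l else 0)"
  define Q where "Q = mat m m (\<lambda>(p, i). if p < s then c i (en p) else 0)"
  have P: "P \<in> carrier_mat m m" and Q: "Q \<in> carrier_mat m m" by (simp_all add: P_def Q_def)
  have PQ: "(P * Q) $$ (l, i) = (\<Sum>g\<in>G. c i g * g $ l)" if "l < m" "i < m" for l i
  proof -
    have "(P * Q) $$ (l, i) = (\<Sum>p<m. if p < s then en p $ l * c i (en p) else 0)"
      using that by (auto simp: P_def Q_def scalar_prod_def lessThan_atLeast0 intro!: sum.cong)
    also have "\<dots> = (\<Sum>p<s. en p $ l * c i (en p))"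
    proof -
      have "{p \<in> {..<m}. p < s} = {..<s}" using \<open>s < m\<close> by auto
      then show ?thesis
        using sum.inter_filter[of "{..<m}" "\<lambda>p. en p $ l * c i (en p)" "\<lambda>p. p < s"] by simp
    qed
    also have "\<dots> = (\<Sum>g\<in>G. g $ l * c i g)" by (rule sum.reindex_bij_betw[OF en])
    finally show ?thesis by (simp add: mult.commute)
  qed
  have "entries_in I (1\<^sub>m m - P * Q)"
    using c PQ P Q by (auto simp: entries_in_def)
  then have "det (1\<^sub>m m) - det (P * Q) \<in> I"
    using P Q by (intro det_diff_in_ideal[OF I(1)]) auto
  moreover have "det Q = 0"
    using Q \<open>s < m\<close> by (intro det_zero_row) (auto simp: Q_def)
  ultimately show False using I(2) det_mult[OF P Q] by simp
qed

lemma generators_card_ge_dim: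
  assumes "is_ideal I" "1 \<notin> I" "B \<in> carrier_mat m m" "entries_in I B"
    and "finite G" "G \<subseteq> carrier_vec m" "zspan m B G = carrier_vec m"
  shows "m \<le> card G"
  by (rule card_ge_dim_if_spans_mod_ideal[OF assms(1,2,5)])
    (use zspan_cong_lincomb[OF assms(1,3,4,6)] assms(7) unit_vec_carrier in blast)

lemma sum_mult_unit_vec_index:
  fixes a :: "nat \<Rightarrow> 'a::semiring_1"
  assumes "K \<subseteq> {..<m}" and "l < m"
  shows "(\<Sum>k\<in>K. a k * unit_vec m k $ l) = (if l \<in> K then a l else 0)"
proof -
  have "(\<Sum>k\<in>K. a k * unit_vec m k $ l) = (\<Sum>k\<in>K. if k = l then a l else 0)"
    using assms by (intro sum.cong) (auto simp: subset_iff)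
  then show ?thesis using finite_subset[OF assms(1)] by simp
qed

lemma in_zspan_unit_vecs:
  assumes B: "B \<in> carrier_mat m m" and K: "K \<subseteq> {..<m}" and w: "w \<in> carrier_vec m"
    and w_eq: "\<And>l. l < m \<Longrightarrow> w $ l = (\<Sum>k\<in>K. a k * unit_vec m k $ l + b k * B $$ (l, k))"
  shows "w \<in> zspan m B (unit_vec m ` K)"
proof -
  have inj: "inj_on (unit_vec m :: nat \<Rightarrow> 'a vec) K"
    using inj_on_unit_vec K by (rule inj_on_subset)
  define c where "c g t = (if t = 0 then a else b) (inv_into K (unit_vec m) g)"
    for g :: "'a vec" and t :: nat
  have "w $ l = (\<Sum>g\<in>unit_vec m ` K. \<Sum>t<2. c g t * ((B ^\<^sub>m t) *\<^sub>v g) $ l)" if l: "l < m" for l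
  proof -
    have "(\<Sum>g\<in>unit_vec m ` K. \<Sum>t<2. c g t * ((B ^\<^sub>m t) *\<^sub>v g) $ l)
        = (\<Sum>k\<in>K. \<Sum>t<2. c (unit_vec m k) t * ((B ^\<^sub>m t) *\<^sub>v unit_vec m k) $ l)"
      by (rule sum.reindex[OF inj, unfolded comp_def])
    also have "\<dots> = (\<Sum>k\<in>K. a k * unit_vec m k $ l + b k * B $$ (l, k))"
      using B K l inj by (intro sum.cong) (auto simp: c_def numeral_2_eq_2)
    finally show ?thesis using w_eq[OF l] by simp
  qed
  then show ?thesis using w unfolding zspan_def by blast
qed

lemma zspan_unit_vecs:
  assumes B: "B \<in> carrier_mat m m"
  shows "zspan m B (unit_vec m ` {..<m}) = carrier_vec m"
proof
  show "carrier_vec m \<subseteq> zspan m B (unit_vec m ` {..<m})"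
  proof
    fix w :: "'a vec" assume w: "w \<in> carrier_vec m"
    show "w \<in> zspan m B (unit_vec m ` {..<m})"
      by (rule in_zspan_unit_vecs[OF B _ w, where a = "\<lambda>k. w $ k" and b = "\<lambda>_. 0"])
        (simp_all add: sum_mult_unit_vec_index del: index_unit_vec)
  qed
qed (auto simp: zspan_def)

text \<open>A unit entry \<open>B\<^sub>i\<^sub>j\<close> with \<open>i \<noteq> j\<close> makes \<open>e\<^sub>i\<close> superfluous:
  \<open>e\<^sub>i = v (z e\<^sub>j - \<Sum>\<^sub>k\<^sub>\<noteq>\<^sub>i B\<^sub>k\<^sub>j e\<^sub>k)\<close> where \<open>v B\<^sub>i\<^sub>j = 1\<close>.\<close>

lemma zspan_unit_vecs_remove:
  assumes B: "B \<in> carrier_mat m m" and ij: "i < m" "j < m" "i \<noteq> j" and v: "B $$ (i, j) * v = 1"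
  shows "zspan m B (unit_vec m ` ({..<m} - {i})) = carrier_vec m"
proof
  show "carrier_vec m \<subseteq> zspan m B (unit_vec m ` ({..<m} - {i}))"
  proof
    fix w :: "'a vec" assume w: "w \<in> carrier_vec m"
    define a where "a k = w $ k - w $ i * v * B $$ (k, j)" for k
    define b where "b k = (if k = j then w $ i * v else 0)" for k
    have "w $ l = (\<Sum>k\<in>{..<m} - {i}. a k * unit_vec m k $ l + b k * B $$ (l, k))" if l: "l < m" for l
    proof -
      have "(\<Sum>k\<in>{..<m} - {i}. a k * unit_vec m k $ l) = (if l = i then 0 else a l)"
        using l by (subst sum_mult_unit_vec_index) auto
      moreover have "(\<Sum>k\<in>{..<m} - {i}. b k * B $$ (l, k))
          = (\<Sum>k\<in>{..<m} - {i}. if k = j then w $ i * v * B $$ (l, j) else 0)"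
        by (intro sum.cong) (auto simp: b_def)
      then have "(\<Sum>k\<in>{..<m} - {i}. b k * B $$ (l, k)) = w $ i * v * B $$ (l, j)"
        using ij by simp
      moreover have "w $ i * v * B $$ (i, j) = w $ i"
        using v by (metis mult.assoc mult.commute mult_1_right)
      ultimately show ?thesis by (simp add: sum.distrib a_def)
    qed
    then show "w \<in> zspan m B (unit_vec m ` ({..<m} - {i}))"
      using B w by (intro in_zspan_unit_vecs) auto
  qed
qed (auto simp: zspan_def)

lemma mu_gen_le_card:
  assumes "finite G" "G \<subseteq> carrier_vec m" "zspan m B G = carrier_vec m"
  shows "mu_gen m B \<le> card G"
  unfolding mu_gen_def by (rule Least_le) (use assms in blast)

lemma mu_gen_eq_dim_if_entries_in:
  assumes "is_ideal I" "1 \<notin> I" "B \<in> carrier_mat m m" "entries_in I B"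
  shows "mu_gen m B = m"
  unfolding mu_gen_def
proof (rule Least_equality)
  show "\<exists>G. finite G \<and> card G = m \<and> G \<subseteq> carrier_vec m \<and> zspan m B G = carrier_vec m"
    using zspan_unit_vecs[OF assms(3)] card_image[OF inj_on_unit_vec]
    by (intro exI[of _ "unit_vec m ` {..<m}"]) auto
qed (use generators_card_ge_dim[OF assms] in blast)

lemma mu_gen_less_dim_if_unit_offdiag:
  assumes B: "B \<in> carrier_mat m m" and ij: "i < m" "j < m" "i \<noteq> j" and "B $$ (i, j) dvd 1"
  shows "mu_gen m B < m"
proof -
  from \<open>B $$ (i, j) dvd 1\<close> obtain v where v: "B $$ (i, j) * v = 1" by (metis dvdE)
  have "inj_on (unit_vec m :: nat \<Rightarrow> 'a vec) ({..<m} - {i})"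
    using inj_on_unit_vec by (rule inj_on_subset) auto
  then have "card (unit_vec m ` ({..<m} - {i}) :: 'a vec set) = m - 1"
    using ij by (simp add: card_image)
  moreover have "mu_gen m B \<le> card (unit_vec m ` ({..<m} - {i}) :: 'a vec set)"
    using zspan_unit_vecs_remove[OF B ij v] by (intro mu_gen_le_card) auto
  ultimately show ?thesis using ij by linarith
qed

lemma local_ring_mu_gen_eq_dim_iff:
  assumes loc: "local_ring TYPE('a::comm_ring_1)" and B: "(B :: 'a mat) \<in> carrier_mat m m"
    and diag: "\<forall>i<m. \<forall>j<m. i \<noteq> j \<longrightarrow> B $$ (i, j) \<in> max_ideal \<Longrightarrow> \<forall>i<m. B $$ (i, i) \<in> max_ideal"
  shows "mu_gen m B = m \<longleftrightarrow> entries_in max_ideal B"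
proof
  assume "mu_gen m B = m"
  then have "B $$ (i, j) \<in> max_ideal" if "i < m" "j < m" "i \<noteq> j" for i j
    using mu_gen_less_dim_if_unit_offdiag[OF B that] local_ring_notin_max_ideal_iff[OF loc] by auto
  with diag show "entries_in max_ideal B"
    using B unfolding entries_in_def by (metis carrier_matD)
qed (use mu_gen_eq_dim_if_entries_in local_ring_is_ideal_max_ideal[OF loc]
       local_ring_one_notin_max_ideal[OF loc] B in blast)

section \<open>The modules \<open>N\<close> and \<open>X\<^sup>\<sharp>\<close>\<close>

lemma pow_mat_entries_cong_diag:
  assumes I: "is_ideal I" and A: "A \<in> carrier_mat r r"
    and off: "\<And>i j. i < r \<Longrightarrow> j < r \<Longrightarrow> i \<noteq> j \<Longrightarrow> A $$ (i, j) \<in> I"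
  shows "(\<forall>i<r. \<forall>j<r. i \<noteq> j \<longrightarrow> (A ^\<^sub>m k) $$ (i, j) \<in> I) \<and>
         (\<forall>i<r. (A ^\<^sub>m k) $$ (i, i) - A $$ (i, i) ^ k \<in> I)"
proof (induction k)
  case 0
  show ?case using A ideal_zero[OF I] by auto
next
  case (Suc k)
  have entry: "(A ^\<^sub>m Suc k) $$ (i, j) = (\<Sum>l<r. (A ^\<^sub>m k) $$ (i, l) * A $$ (l, j))"
    if "i < r" "j < r" for i j
    using A that by (simp add: scalar_prod_def lessThan_atLeast0)
  show ?case
  proof (intro conjI allI impI)
    fix i j assume ij: "i < r" "j < r" "i \<noteq> j"
    have "(A ^\<^sub>m k) $$ (i, l) * A $$ (l, j) \<in> I" if "l < r" for l
      using Suc ij that off ideal_mult_left[OF I] ideal_mult_right[OF I] by (cases "l = i") auto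
    then show "(A ^\<^sub>m Suc k) $$ (i, j) \<in> I"
      unfolding entry[OF ij(1,2)] by (auto intro: ideal_sum[OF I])
  next
    fix i assume i: "i < r"
    have "(A ^\<^sub>m Suc k) $$ (i, i) - A $$ (i, i) ^ Suc k
        = ((A ^\<^sub>m k) $$ (i, i) - A $$ (i, i) ^ k) * A $$ (i, i)
          + (\<Sum>l\<in>{..<r} - {i}. (A ^\<^sub>m k) $$ (i, l) * A $$ (l, i))"
      unfolding entry[OF i i] using i by (simp add: sum.remove algebra_simps)
    also have "\<dots> \<in> I"
      using Suc i by (intro ideal_add[OF I] ideal_mult_right[OF I] ideal_sum[OF I]) auto
    finally show "(A ^\<^sub>m Suc k) $$ (i, i) - A $$ (i, i) ^ Suc k \<in> I" .
  qed
qed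

lemma diag_in_max_ideal_if_pow_mat_scalar:
  assumes loc: "local_ring TYPE('a::comm_ring_1)" and A: "(A :: 'a mat) \<in> carrier_mat r r"
    and pow: "A ^\<^sub>m d = c \<cdot>\<^sub>m 1\<^sub>m r" and c: "c \<in> max_ideal"
    and off: "\<And>i j. i < r \<Longrightarrow> j < r \<Longrightarrow> i \<noteq> j \<Longrightarrow> A $$ (i, j) \<in> max_ideal"
    and i: "i < r"
  shows "A $$ (i, i) \<in> max_ideal"
proof -
  have I: "is_ideal (max_ideal :: 'a set)" by (rule local_ring_is_ideal_max_ideal[OF loc])
  have "c - A $$ (i, i) ^ d \<in> max_ideal"
    using pow_mat_entries_cong_diag[OF I A off, of d] pow i by simp
  then have "c - (c - A $$ (i, i) ^ d) \<in> max_ideal" using ideal_diff[OF I c] by blast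
  then show ?thesis using local_ring_power_in_max_ideal[OF loc] by simp
qed

lemma mult_mat_vec_in_max_ideal_vecs_iff:
  assumes I: "is_ideal (max_ideal :: 'a::comm_ring_1 set)" and M: "(M :: 'a mat) \<in> carrier_mat k m"
  shows "(\<forall>v\<in>carrier_vec m. M *\<^sub>v v \<in> max_ideal_vecs k) \<longleftrightarrow> entries_in max_ideal M"
proof
  assume h: "\<forall>v\<in>carrier_vec m. M *\<^sub>v v \<in> max_ideal_vecs k"
  have "M $$ (a, b) \<in> max_ideal" if "a < k" "b < m" for a b
    using h[rule_format, OF unit_vec_carrier[of m b]] M that by (simp add: max_ideal_vecs_def)
  then show "entries_in max_ideal M" using M by (simp add: entries_in_def)
next
  assume "entries_in max_ideal M"
  then show "\<forall>v\<in>carrier_vec m. M *\<^sub>v v \<in> max_ideal_vecs k"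
    using M entries_in_mult_mat_vec[OF I] by (auto simp: max_ideal_vecs_def)
qed

lemma reduced_mf_iff_entries_in:
  assumes "is_ideal (max_ideal :: 'a::comm_ring_1 set)"
    and "\<forall>k\<in>{1..d}. (phi k :: 'a mat) \<in> carrier_mat n n"
  shows "reduced_mf d n phi \<longleftrightarrow> (\<forall>k\<in>{1..d}. entries_in max_ideal (phi k))"
  using mult_mat_vec_in_max_ideal_vecs_iff[OF assms(1)] assms(2) by (simp add: reduced_mf_def)

lemma mu_gen_eq_rank_iff_reduced_flat:
  assumes loc: "local_ring TYPE('a::comm_ring_1)" and "d \<ge> 1" and mu: "(mu :: 'a) dvd 1"
    and A: "A \<in> carrier_mat r r" and pow: "A ^\<^sub>m d = (- f) \<cdot>\<^sub>m 1\<^sub>m r" and f: "f \<in> max_ideal"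
  shows "mu_gen r A = r \<longleftrightarrow> reduced_mf d r (flat_mf mu A)"
proof -
  have I: "is_ideal (max_ideal :: 'a set)" by (rule local_ring_is_ideal_max_ideal[OF loc])
  have "mu_gen r A = r \<longleftrightarrow> entries_in max_ideal A"
    using diag_in_max_ideal_if_pow_mat_scalar[OF loc A pow ideal_uminus[OF I f]]
    by (intro local_ring_mu_gen_eq_dim_iff[OF loc A]) blast
  also have "\<dots> \<longleftrightarrow> entries_in max_ideal (mu \<cdot>\<^sub>m A)"
    using entries_in_smult_unit_iff[OF I mu] by simp
  also have "\<dots> \<longleftrightarrow> reduced_mf d r (flat_mf mu A)"
    using reduced_mf_iff_entries_in[OF I, of d "flat_mf mu A" r] A \<open>d \<ge> 1\<close>
    by (auto simp: flat_mf_def)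
  finally show ?thesis .
qed

lemma the_inverse_dvd_one:
  assumes "(a :: 'a::comm_ring_1) dvd 1"
  shows "(THE b. a * b = 1) dvd 1"
proof -
  from assms obtain b where b: "a * b = 1" by (metis dvdE)
  have "(THE b. a * b = 1) = b"
  proof (rule the_equality)
    fix x assume "a * x = 1"
    then show "x = b" using b by (metis mult.assoc mult.commute mult_1)
  qed (rule b)
  then show ?thesis using b by (metis dvdI mult.commute)
qed

lemma sharp_mat_carrier: "sharp_mat d mu n phi \<in> carrier_mat (d * n) (d * n)"
  by (simp add: sharp_mat_def)

lemma sharp_mat_diag:
  assumes "d \<ge> 2" and "i < d * n"
  shows "sharp_mat d mu n phi $$ (i, i) = 0"
  using assms by (auto simp: sharp_mat_def Let_def)

lemma sharp_mat_entry_cases: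
  assumes "i < d * n" and "j < d * n"
  shows "sharp_mat d mu n phi $$ (i, j) = 0 \<or> (\<exists>k\<in>{1..d}.
    sharp_mat d mu n phi $$ (i, j) = (THE nu. mu * nu = 1) * phi k $$ (i mod n, j mod n))"
proof -
  have "i div n < d" using assms(1) by (simp add: less_mult_imp_div_less)
  then show ?thesis using assms by (auto simp: sharp_mat_def Let_def)
qed

lemma sharp_mat_entry_exists:
  assumes k: "k \<in> {1..d}" and ab: "a < n" "b < n"
  shows "\<exists>i<d * n. \<exists>j<d * n.
    sharp_mat d mu n phi $$ (i, j) = (THE nu. mu * nu = 1) * phi k $$ (a, b)"
proof -
  have block: "q * n + c < d * n" if "q < d" "c < n" for q c
  proof -
    have "q * n + c < Suc q * n" using that(2) by simp
    also have "\<dots> \<le> d * n" using that(1) by (intro mult_le_mono1) simp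
    finally show ?thesis .
  qed
  show ?thesis
  proof (cases "k = d")
    case True
    have "a < d * n" "(d - 1) * n + b < d * n" using block[of 0 a] block[of "d - 1" b] k ab by auto
    moreover have "sharp_mat d mu n phi $$ (a, (d - 1) * n + b) = (THE nu. mu * nu = 1) * phi k $$ (a, b)"
      using calculation True ab by (simp add: sharp_mat_def Let_def)
    ultimately show ?thesis by blast
  next
    case False
    have "(d - k) * n + a < d * n" "(d - k - 1) * n + b < d * n" "1 \<le> d - k"
      using block k ab False by auto
    moreover have "sharp_mat d mu n phi $$ ((d - k) * n + a, (d - k - 1) * n + b)
        = (THE nu. mu * nu = 1) * phi k $$ (a, b)"
      using calculation False k ab by (simp add: sharp_mat_def Let_def)
    ultimately show ?thesis by blast
  qed
qed

lemma entries_in_sharp_mat_iff: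
  assumes I: "is_ideal I" and mu: "mu dvd 1" and phi: "\<forall>k\<in>{1..d}. phi k \<in> carrier_mat n n"
  shows "entries_in I (sharp_mat d mu n phi) \<longleftrightarrow> (\<forall>k\<in>{1..d}. entries_in I (phi k))"
proof
  assume sharp: "entries_in I (sharp_mat d mu n phi)"
  have "phi k $$ (a, b) \<in> I" if kab: "k \<in> {1..d}" "a < n" "b < n" for k a b
  proof -
    obtain i j where "i < d * n" "j < d * n"
      and "sharp_mat d mu n phi $$ (i, j) = (THE nu. mu * nu = 1) * phi k $$ (a, b)"
      using sharp_mat_entry_exists[OF kab] by blast
    then have "(THE nu. mu * nu = 1) * phi k $$ (a, b) \<in> I"
      using sharp sharp_mat_carrier[of d mu n phi] by (metis carrier_matD entries_in_def)
    then show ?thesis using ideal_unit_mult_iff[OF I the_inverse_dvd_one[OF mu]] by blast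
  qed
  then show "\<forall>k\<in>{1..d}. entries_in I (phi k)" using phi by (auto simp: entries_in_def)
next
  assume phi_in: "\<forall>k\<in>{1..d}. entries_in I (phi k)"
  have "sharp_mat d mu n phi $$ (i, j) \<in> I" if ij: "i < d * n" "j < d * n" for i j
  proof -
    have "n > 0" using ij by (cases n) auto
    then have "i mod n < n" "j mod n < n" by simp_all
    then show ?thesis
      using sharp_mat_entry_cases[OF ij, of mu phi] phi phi_in ideal_zero[OF I] ideal_mult_left[OF I]
      by (fastforce simp: entries_in_def)
  qed
  then show "entries_in I (sharp_mat d mu n phi)" by (simp add: entries_in_def sharp_mat_def)
qed

lemma mu_gen_eq_rank_iff_reduced_sharp:
  assumes loc: "local_ring TYPE('a::comm_ring_1)" and "d \<ge> 2" and mu: "(mu :: 'a) dvd 1"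
    and phi: "\<forall>k\<in>{1..d}. phi k \<in> carrier_mat n n"
  shows "mu_gen (d * n) (sharp_mat d mu n phi) = d * n \<longleftrightarrow> reduced_mf d n phi"
proof -
  have I: "is_ideal (max_ideal :: 'a set)" by (rule local_ring_is_ideal_max_ideal[OF loc])
  have "mu_gen (d * n) (sharp_mat d mu n phi) = d * n \<longleftrightarrow> entries_in max_ideal (sharp_mat d mu n phi)"
    by (intro local_ring_mu_gen_eq_dim_iff[OF loc sharp_mat_carrier])
      (simp add: sharp_mat_diag[OF \<open>d \<ge> 2\<close>] ideal_zero[OF I])
  also have "\<dots> \<longleftrightarrow> reduced_mf d n phi"
    using entries_in_sharp_mat_iff[OF I mu phi] reduced_mf_iff_entries_in[OF I phi] by simp
  finally show ?thesis .
qed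

theorem lemma5p7:
  fixes d :: nat and f mu :: "'a::comm_ring_1"
    and r :: nat and A :: "'a mat" and n :: nat and phi :: "nat \<Rightarrow> 'a mat"
  assumes "d \<ge> 2"
    and "regular_local_ring TYPE('a)" and "complete_local_ring TYPE('a)"
    and "residue_field_alg_closed TYPE('a)"
    and "(of_nat d :: 'a) \<notin> max_ideal"
    and "f \<noteq> 0" and "f \<in> ideal_pow max_ideal 2"
    and "irreducible (fps_const f + fps_X ^ d)"
    and "mu ^ d = -1"
    and "A \<in> carrier_mat r r" and "A ^\<^sub>m d = (- f) \<cdot>\<^sub>m 1\<^sub>m r"
    and "is_mf d f n phi"
  shows "(mu_gen r A = r \<longleftrightarrow> reduced_mf d r (flat_mf mu A))
       \<and> (mu_gen (d * n) (sharp_mat d mu n phi) = d * n \<longleftrightarrow> reduced_mf d n phi)"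
proof -
  have loc: "local_ring TYPE('a)" using assms(2) by (simp add: regular_local_ring_def)
  have f: "f \<in> max_ideal"
    using ideal_pow_Suc_subset[OF local_ring_is_ideal_max_ideal[OF loc], of 1] assms(7)
    by (auto simp: numeral_2_eq_2)
  have mu: "mu dvd 1"
  proof -
    have "mu dvd mu ^ d" using assms(1) by simp
    then show ?thesis using assms(9) by simp
  qed
  have phi: "\<forall>k\<in>{1..d}. phi k \<in> carrier_mat n n" using assms(12) by (simp add: is_mf_def)
  show ?thesis
    using mu_gen_eq_rank_iff_reduced_flat[OF loc _ mu assms(10,11) f]
      mu_gen_eq_rank_iff_reduced_sharp[OF loc assms(1) mu phi] assms(1) by simp
qed

end
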